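(* Let $p\geq 80$ be a prime, let $0<\alpha\leq \frac15$ be real, let $d\in[2,p-2]$ be an integer, and let $N$ be a positive integer. Let $I$ and $J$ be arithmetic progressions in $\mathbb{Z}/p\mathbb{Z}$ having the same common difference and satisfying $|I|=2N-1$, $|J|>(1+\alpha)N-3$, and $|I\cap (d\cdot J)|\leq \alpha N-2$. Then $N<\frac{p+3}{3+\alpha}$.
   Context: An arithmetic progression in $\mathbb{Z}/p\mathbb{Z}$ with difference $g\neq 0$ is a set of the form $\{a, a+g,\dots,a+(k-1)g\}$ with $1\le k\le p$. For $X\subseteq\mathbb{Z}/p\mathbb{Z}$ and an integer $d$, the dilate is $d\cdot X=\{dx: x\in X\}$. *)

theory Defs
  imports "HOL-Computational_Algebra.Primes" Complex_Main
begin

text \<open>Z/pZ is represented by the canonical residues {0..<p} of type int.\<close>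

definition arith_prog :: "int \<Rightarrow> int \<Rightarrow> int \<Rightarrow> nat \<Rightarrow> int set" where
  "arith_prog p a g k = {(a + int i * g) mod p | i. i < k}"

definition is_AP_with_diff :: "int \<Rightarrow> int \<Rightarrow> int set \<Rightarrow> bool" where
  "is_AP_with_diff p g X \<longleftrightarrow> g mod p \<noteq> 0 \<and>
     (\<exists>a k. 1 \<le> k \<and> int k \<le> p \<and> X = arith_prog p a g k)"

definition dilate :: "int \<Rightarrow> int \<Rightarrow> int set \<Rightarrow> int set" where
  "dilate p d X = (\<lambda>x. (d * x) mod p) ` X"

end

theory Submission
  imports Defs "HOL-Number_Theory.Cong"
begin

text \<open>
  Multiplying by the inverse of g and translating turns I into the segment [0, K) with K = 2N - 1
  and d\<cdot>J into the progression x, x + d, \<dots>, x + (m - 1) d; let e be the number of its terms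
  lying in the segment. For a shift t, pair the j-th term with the (j + t)-th: pairs with no term
  in the segment inject, via their first term, into the residues u with u and u + t d both outside
  the segment, so m - t - 2e is at most the distance from t d mod p to [p - K, K]. For t = 1 this
  gives \<delta> = min d (p - d) \<le> 2e + 1; choosing t minimal with t (\<delta> - 1) > 2e + 1 then yields a
  contradiction as soon as K > 6e + 3, which is what N \<ge> (p + 3)/(3 + \<alpha>) forces.
\<close>

definition segment_hits :: "int \<Rightarrow> int \<Rightarrow> int \<Rightarrow> nat \<Rightarrow> int \<Rightarrow> nat set" where
  "segment_hits p x d m K = {j. j < m \<and> (x + int j * d) mod p < K}"

lemma arith_prog_eq_image: "arith_prog p a g k = (\<lambda>i. (a + int i * g) mod p) ` {..<k}"
  unfolding arith_prog_def by auto

lemma inj_on_mod_progression: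
  fixes p x c :: int
  assumes "prime p" "\<not> p dvd c" "int k \<le> p"
  shows "inj_on (\<lambda>i. (x + int i * c) mod p) {..<k}"
proof (rule inj_onI)
  fix i j assume ij: "i \<in> {..<k}" "j \<in> {..<k}"
    and "(x + int i * c) mod p = (x + int j * c) mod p"
  then have "p dvd (int i - int j) * c" by (simp add: mod_eq_dvd_iff algebra_simps)
  with assms(1,2) have "p dvd int i - int j" by (simp add: prime_dvd_mult_iff)
  moreover have "\<bar>int i - int j\<bar> < p" using ij assms(3) by auto
  ultimately show "i = j" using dvd_imp_le_int[of "int i - int j" p] by fastforce
qed

lemma card_arith_prog:
  assumes "prime p" "g mod p \<noteq> 0" "int k \<le> p"
  shows "card (arith_prog p a g k) = k"
  using inj_on_mod_progression[OF assms(1) _ assms(3)] assms(2)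
  by (simp add: arith_prog_eq_image card_image dvd_eq_mod_eq_0)

lemma mem_arith_prog_iff:
  fixes p a g g' z :: int
  assumes "p > 0" "[g * g' = 1] (mod p)" "int k \<le> p" "0 \<le> z" "z < p"
  shows "z \<in> arith_prog p a g k \<longleftrightarrow> ((z - a) * g') mod p < int k"
proof
  assume "z \<in> arith_prog p a g k"
  then obtain i where i: "i < k" "z = (a + int i * g) mod p" unfolding arith_prog_def by auto
  have "[(z - a) * g' = (a + int i * g - a) * g'] (mod p)"
    using i(2) unfolding cong_def by (metis mod_diff_left_eq mod_mult_left_eq)
  also have "(a + int i * g - a) * g' = int i * (g * g')" by (simp add: algebra_simps)
  also have "[\<dots> = int i * 1] (mod p)" using assms(2) by (rule cong_mult[OF cong_refl])
  finally have "((z - a) * g') mod p = int i"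
    using i(1) assms(3) by (simp add: cong_def)
  with i(1) show "((z - a) * g') mod p < int k" by linarith
next
  assume h: "((z - a) * g') mod p < int k"
  define i where "i = nat (((z - a) * g') mod p)"
  have i: "int i = ((z - a) * g') mod p" unfolding i_def using assms(1) by simp
  have "[a + int i * g = a + (z - a) * g' * g] (mod p)"
    unfolding i cong_def by (metis mod_add_right_eq mod_mult_left_eq)
  also have "a + (z - a) * g' * g = a + (z - a) * (g * g')" by (simp add: algebra_simps)
  also have "[\<dots> = a + (z - a) * 1] (mod p)"
    using assms(2) by (intro cong_add cong_mult cong_refl)
  finally have "z = (a + int i * g) mod p" using assms(4,5) by (simp add: cong_def)
  moreover have "i < k" using h i by linarith
  ultimately show "z \<in> arith_prog p a g k" unfolding arith_prog_def by auto
qed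

lemma card_inter_dilate_arith_prog:
  fixes p a b g d :: int
  assumes "prime p" "g mod p \<noteq> 0" "\<not> p dvd d" "int k \<le> p" "int m \<le> p"
  shows "\<exists>x. card (arith_prog p a g k \<inter> dilate p d (arith_prog p b g m))
              = card (segment_hits p x d m (int k))"
proof -
  have p: "p > 0" using assms(1) prime_gt_0_int by blast
  have "coprime g p"
    using assms(1,2) prime_imp_coprime[of p g] by (simp add: dvd_eq_mod_eq_0 coprime_commute)
  then obtain g' where g': "[g * g' = 1] (mod p)" using cong_solve_coprime_int by blast
  define x where "x = (d * b - a) * g'"
  define w where "w j = (d * ((b + int j * g) mod p)) mod p" for j :: nat
  define y where "y j = (x + int j * d) mod p" for j :: nat
  have normalize_w: "((w j - a) * g') mod p = y j" for j
  proof -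
    have "[(w j - a) * g' = (d * (b + int j * g) - a) * g'] (mod p)"
      unfolding w_def cong_def by (metis mod_diff_left_eq mod_mult_left_eq mod_mult_right_eq)
    also have "(d * (b + int j * g) - a) * g' = x + int j * d * (g * g')"
      unfolding x_def by (simp add: algebra_simps)
    also have "[\<dots> = x + int j * d * 1] (mod p)"
      using g' by (intro cong_add cong_mult cong_refl)
    finally show ?thesis unfolding y_def cong_def by simp
  qed
  have w_range: "0 \<le> w j" "w j < p" for j unfolding w_def using p by auto
  have "inj_on y {..<m}"
    unfolding y_def using inj_on_mod_progression[OF assms(1,3,5)] .
  then have "inj_on ((\<lambda>z. ((z - a) * g') mod p) \<circ> w) {..<m}"
    by (simp add: comp_def normalize_w)
  then have inj_w: "inj_on w {..<m}" by (rule inj_on_imageI2)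
  have "dilate p d (arith_prog p b g m) = w ` {..<m}"
    unfolding dilate_def arith_prog_eq_image w_def by auto
  then have "arith_prog p a g k \<inter> dilate p d (arith_prog p b g m) = w ` segment_hits p x d m (int k)"
    using mem_arith_prog_iff[OF p g' assms(4) w_range] normalize_w
    unfolding segment_hits_def y_def by auto
  moreover have "inj_on w (segment_hits p x d m (int k))"
    using inj_w by (rule inj_on_subset) (auto simp: segment_hits_def)
  ultimately show ?thesis by (auto simp: card_image)
qed

lemma card_shift_outside_segment_le:
  fixes p r K :: int
  assumes "0 \<le> r" "r < p"
  shows "card {u. K \<le> u \<and> u < p \<and> K \<le> (u + r) mod p} \<le> nat (p - r - K) + nat (r - K)"
proof -
  have "{u. K \<le> u \<and> u < p \<and> K \<le> (u + r) mod p} \<subseteq> {p + K - r..<p} \<union> {K..<p - r}"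
  proof (intro subsetI UnCI)
    fix u assume u: "u \<in> {u. K \<le> u \<and> u < p \<and> K \<le> (u + r) mod p}" "u \<notin> {K..<p - r}"
    then have "(u + r) mod p = (u + r - p) mod p" by simp
    also have "\<dots> = u + r - p" using u assms by (intro mod_pos_pos_trivial) auto
    finally show "u \<in> {p + K - r..<p}" using u by simp
  qed
  then have "card {u. K \<le> u \<and> u < p \<and> K \<le> (u + r) mod p} \<le> card ({p + K - r..<p} \<union> {K..<p - r})"
    by (intro card_mono) auto
  also have "\<dots> \<le> nat (p - r - K) + nat (r - K)"
    using card_Un_le[of "{p + K - r..<p}" "{K..<p - r}"] by simp
  finally show ?thesis .
qed

lemma segment_hits_pair_bound:
  fixes p x d K :: int
  assumes "prime p" "\<not> p dvd d" "int m \<le> p" "t \<le> m"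
  shows "int m - int t - 2 * int (card (segment_hits p x d m K))
           \<le> max 0 (p - (int t * d) mod p - K) + max 0 ((int t * d) mod p - K)"
proof -
  define y where "y j = (x + int j * d) mod p" for j :: nat
  define r where "r = (int t * d) mod p"
  define H where "H = segment_hits p x d m K"
  define P where "P = {i. i + t < m \<and> K \<le> y i \<and> K \<le> y (i + t)}"
  have p: "p > 0" using assms(1) prime_gt_0_int by blast
  have fin: "finite H" "finite P" "finite {i. i + t \<in> H}"
    unfolding H_def P_def segment_hits_def by (auto intro: finite_subset[of _ "{..<m}"])
  have "{..<m - t} \<subseteq> P \<union> H \<union> {i. i + t \<in> H}"
    unfolding P_def H_def segment_hits_def y_def by auto
  then have "m - t \<le> card P + card H + card {i. i + t \<in> H}"
    using fin card_mono[of "P \<union> H \<union> {i. i + t \<in> H}" "{..<m - t}"]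
      card_Un_le[of "P \<union> H" "{i. i + t \<in> H}"] card_Un_le[of P H] by simp
  moreover have "card {i. i + t \<in> H} \<le> card H"
    by (rule card_inj_on_le[where f = "\<lambda>i. i + t"]) (auto simp: fin inj_on_def)
  moreover have "int (card P) \<le> max 0 (p - r - K) + max 0 (r - K)"
  proof -
    have "y (i + t) = (y i + r) mod p" for i
      unfolding y_def r_def by (simp add: algebra_simps mod_add_eq)
    then have "y ` P \<subseteq> {u. K \<le> u \<and> u < p \<and> K \<le> (u + r) mod p}"
      using p unfolding P_def by (auto simp: y_def)
    moreover have "inj_on y P"
      using inj_on_mod_progression[OF assms(1-3), of x] unfolding y_def
      by (rule inj_on_subset) (auto simp: P_def)
    ultimately have "card P \<le> card {u. K \<le> u \<and> u < p \<and> K \<le> (u + r) mod p}"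
      by (intro card_inj_on_le) (auto intro: finite_subset[of _ "{K..<p}"])
    also have "\<dots> \<le> nat (p - r - K) + nat (r - K)"
      using p by (intro card_shift_outside_segment_le) (auto simp: r_def)
    finally show ?thesis by linarith
  qed
  ultimately show ?thesis
    using assms(4) unfolding H_def r_def by linarith
qed

lemma min_step_le_segment_hits:
  fixes p d x K :: int and m :: nat
  defines "e \<equiv> int (card (segment_hits p x d m K))"
  assumes "prime p" "2 \<le> d" "d \<le> p - 2" "int m \<le> p"
    and "p \<le> 2 * K" "p - K \<le> int m" "2 * e + 1 < int m"
  shows "min d (p - d) \<le> 2 * e + 1"
proof -
  have "\<not> p dvd d" using assms(3,4) zdvd_not_zless[of d p] by auto
  moreover have "1 \<le> m" using assms(8) unfolding e_def by linarith
  ultimately have "int m - 1 - 2 * e \<le> max 0 (p - d - K) + max 0 (d - K)"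
    using segment_hits_pair_bound[OF assms(2) _ assms(5), of d 1 x K] assms(3,4)
    unfolding e_def by simp
  with assms(6-8) show ?thesis by (simp add: max_def min_def split: if_splits)
qed

lemma exists_multiple_in_window:
  fixes a b :: int
  assumes "0 \<le> a" "0 < b"
  obtains t :: nat where "a < int t * b" "int t * b \<le> a + b"
proof
  define q where "q = a div b"
  have "q * b + a mod b = a" "0 \<le> a mod b" "a mod b < b" "0 \<le> q"
    using assms unfolding q_def by (simp_all add: pos_imp_zdiv_nonneg_iff)
  then show "a < int (nat (q + 1)) * b" "int (nat (q + 1)) * b \<le> a + b"
    by (simp_all add: distrib_right)
qed

lemma segment_hits_lower_bound:
  fixes p d x K :: int and m :: nat
  defines "e \<equiv> int (card (segment_hits p x d m K))"
  assumes "prime p" "2 \<le> d" "d \<le> p - 2" "int m \<le> p"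
    and "K \<le> p" "p \<le> 2 * K" "p - K \<le> int m" "4 * e + 3 \<le> int m"
  shows "K \<le> 6 * e + 3"
proof (rule ccontr)
  assume K_large: "\<not> K \<le> 6 * e + 3"
  define \<delta> where "\<delta> = min d (p - d)"
  have \<delta>: "2 \<le> \<delta>" "\<delta> \<le> 2 * e + 1"
    using assms(3,4) min_step_le_segment_hits[OF assms(2-5,7,8)] assms(9)
    unfolding \<delta>_def e_def by simp_all
  obtain t :: nat where t: "2 * e + 1 < int t * (\<delta> - 1)" "int t * (\<delta> - 1) \<le> 2 * e + 1 + (\<delta> - 1)"
    using exists_multiple_in_window[of "2 * e + 1" "\<delta> - 1"] \<delta>(1) unfolding e_def by auto
  have t_le: "int t \<le> 2 * e + 2"
  proof -
    have "1 \<le> int t" using t(1) unfolding e_def by (cases t) auto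
    with \<delta>(1) have "0 \<le> (int t - 1) * (\<delta> - 2)" by simp
    with t(2) show ?thesis by (simp add: algebra_simps)
  qed
  have t\<delta>: "0 < int t * \<delta>" "int t * \<delta> < K"
    using t t_le \<delta> K_large by (simp_all add: algebra_simps)
  have "(int t * d) mod p = int t * \<delta> \<or> (int t * d) mod p = p - int t * \<delta>"
  proof (cases "d \<le> p - d")
    case True
    then show ?thesis using t\<delta> assms(6) unfolding \<delta>_def by simp
  next
    case False
    then have "int t * d = (p - int t * \<delta>) + (int t - 1) * p"
      unfolding \<delta>_def by (simp add: algebra_simps)
    then have "(int t * d) mod p = (p - int t * \<delta>) mod p" by simp
    also have "\<dots> = p - int t * \<delta>" using t\<delta> assms(6) by (intro mod_pos_pos_trivial) auto
    finally show ?thesis ..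
  qed
  moreover have "int m - int t - 2 * e
      \<le> max 0 (p - (int t * d) mod p - K) + max 0 ((int t * d) mod p - K)"
    using segment_hits_pair_bound[OF assms(2) _ assms(5)] assms(3,4,9) t_le zdvd_not_zless[of d p]
    unfolding e_def by auto
  ultimately have "int m - int t - 2 * e \<le> max 0 (p - K - int t * \<delta>)"
    using t\<delta> assms(7) by (auto simp: max_def)
  then show False
    using t(1) t_le assms(8,9) by (simp add: algebra_simps max_def split: if_splits)
qed

theorem lemma3p3:
  fixes p d :: int and \<alpha> :: real and N :: nat and I J :: "int set" and g :: int
  assumes "prime p" and "p \<ge> 80"
    and "0 < \<alpha>" and "\<alpha> \<le> 1/5"
    and "2 \<le> d" and "d \<le> p - 2"
    and "N > 0"
    and "is_AP_with_diff p g I" and "is_AP_with_diff p g J"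
    and "card I = 2 * N - 1"
    and "real (card J) > (1 + \<alpha>) * real N - 3"
    and "real (card (I \<inter> dilate p d J)) \<le> \<alpha> * real N - 2"
  shows "real N < (real_of_int p + 3) / (3 + \<alpha>)"
proof (rule ccontr)
  assume N_large: "\<not> ?thesis"
  define A where "A = \<alpha> * real N"
  have p_le: "real_of_int p + 3 \<le> 3 * real N + A"
    using N_large assms(3) unfolding A_def by (simp add: not_less divide_le_eq algebra_simps)
  have A_le: "A \<le> real N / 5" using mult_right_mono[OF assms(4), of "real N"] unfolding A_def by simp
  obtain a k where g: "g mod p \<noteq> 0" and k: "int k \<le> p" and I: "I = arith_prog p a g k"
    using assms(8) unfolding is_AP_with_diff_def by blast
  obtain b m where m: "int m \<le> p" and J: "J = arith_prog p b g m"
    using assms(9) unfolding is_AP_with_diff_def by blast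
  have "\<not> p dvd d" using assms(5,6) zdvd_not_zless[of d p] by auto
  then obtain x where hits: "card (I \<inter> dilate p d J) = card (segment_hits p x d m (int k))"
    using card_inter_dilate_arith_prog[OF assms(1) g _ k m] unfolding I J by blast
  have k_eq: "real k = 2 * real N - 1" and m_gt: "real m > real N + A - 3"
    using card_arith_prog[OF assms(1) g] k m assms(7,10,11) unfolding I J A_def by (auto simp: algebra_simps)
  define e where "e = int (card (segment_hits p x d m (int k)))"
  have e_le: "real_of_int e \<le> A - 2" using assms(12) hits unfolding e_def A_def by simp
  have "real_of_int (p - int k) < real_of_int (int m + 1)" "real_of_int p \<le> real_of_int (2 * int k)"
    "real_of_int (4 * e + 3) < real_of_int (int m + 1)"
    using p_le A_le k_eq m_gt e_le by simp_all
  then have "int k \<le> 6 * e + 3"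
    unfolding e_def of_int_less_iff of_int_le_iff
    by (intro segment_hits_lower_bound[OF assms(1,5,6) m k]) simp_all
  then show False using k_eq e_le A_le by linarith
qed

end
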